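(* Let $\lambda>0$, ${\rm T}>0$, $\mu>0$, $\sigma^2\ge 0$, $\alpha>2$ and $0<a\le 1$. For $\gamma_1\in(0,a)$ put $\gamma_2=a-\gamma_1$ and $$\mathrm{DSR}(\gamma_1)=\lambda\gamma_2\,p_{\rm cov}({\rm T},\lambda\gamma_1,\alpha).$$ If $\gamma_1^*\in(0,a)$ is a point at which $\mathrm{DSR}$ attains its maximum over $(0,a)$, then $\gamma_1^*<a/2<\gamma_2^*=a-\gamma_1^*< a\le 1$.
   Context: For $x>0$ the coverage probability is $$p_{\rm cov}({\rm T},x,\alpha)=\pi x\int_0^\infty e^{-\pi x r\,\beta({\rm T},\alpha)-\mu{\rm T}\sigma^2 r^{\alpha/2}}\,dr,$$ where $$\beta({\rm T},\alpha)=\frac{2(\mu{\rm T})^{2/\alpha}}{\alpha}\,\mathbb{E}\Big[g^{2/\alpha}\big(\Gamma(-2/\alpha,\mu{\rm T}g)-\Gamma(-2/\alpha)\big)\Big]>0,$$ with $g$ exponentially distributed with rate $\mu$ and $\Gamma(\cdot,\cdot)$ the upper incomplete Gamma function. This is the SINR coverage probability of a typical receiver served by its nearest transmitter when the transmitters form a homogeneous Poisson point process of intensity $x$, with Rayleigh fading, path loss exponent $\alpha$, transmit power $1/\mu$ and noise power $\sigma^2$. In the single-file model, the users form a homogeneous PPP of intensity $\lambda$. Independently, each user is a transmitter (fraction $\gamma_1$) or a receiver (fraction $\gamma_2$), with $\gamma_1+\gamma_2=a$. $\mathrm{DSR}$ denotes the density of successful receptions. *)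

theory Defs
  imports "HOL-Analysis.Analysis"
begin

definition upper_inc_Gamma :: "real \<Rightarrow> real \<Rightarrow> real" where
  "upper_inc_Gamma s x = (LINT t:{x..}|lborel. t powr (s - 1) * exp (- t))"

text \<open>beta(T, alpha) for g exponentially distributed with rate mu (expectation written
  as integral against the density mu e^(-mu g) on [0,oo)).\<close>
definition beta_fn :: "real \<Rightarrow> real \<Rightarrow> real \<Rightarrow> real" where
  "beta_fn mu T alpha =
     2 * (mu * T) powr (2 / alpha) / alpha *
     (LINT g:{0<..}|lborel. mu * exp (- mu * g) *
        (g powr (2 / alpha) *
          (upper_inc_Gamma (- 2 / alpha) (mu * T * g) - Gamma (- 2 / alpha))))"

definition p_cov :: "real \<Rightarrow> real \<Rightarrow> real \<Rightarrow> real \<Rightarrow> real \<Rightarrow> real" where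
  "p_cov mu sigma2 T x alpha =
     pi * x * (LINT r:{0..}|lborel.
        exp (- pi * x * r * beta_fn mu T alpha - mu * T * sigma2 * r powr (alpha / 2)))"

definition DSR :: "real \<Rightarrow> real \<Rightarrow> real \<Rightarrow> real \<Rightarrow> real \<Rightarrow> real \<Rightarrow> real \<Rightarrow> real" where
  "DSR lam mu sigma2 T alpha a g1 = lam * (a - g1) * p_cov mu sigma2 T (lam * g1) alpha"

end

theory Submission
  imports Defs
begin

text \<open>Write \<open>DSR(g) = \<pi> \<lambda>\<^sup>2 g (a - g) L(\<pi> \<beta> \<lambda> g)\<close>, where \<open>L(k)\<close> is the Laplace transform of the
  stretched exponential \<open>exp (- c r\<^sup>p)\<close>. The factor \<open>g (a - g)\<close> is symmetric about \<open>a/2\<close>, while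
  \<open>L\<close> is strictly decreasing, with \<open>L(k - \<delta>) \<ge> L(k) + \<delta> L\<^sub>1(k)\<close> by \<open>exp y \<ge> 1 + y\<close>, where
  \<open>L\<^sub>1(k) > 0\<close> is the first moment. So from any \<open>g \<ge> a/2\<close> a small step to the left loses at most
  a second-order amount in \<open>g (a - g)\<close> but gains a first-order amount in \<open>L\<close>: no maximiser lies in
  \<open>[a/2, a)\<close>. The only property of \<open>\<beta>\<close> needed is \<open>\<beta> > 0\<close>, which holds because
  \<open>\<Gamma>(-2/\<alpha>) < 0 \<le> \<Gamma>(-2/\<alpha>, x)\<close>.\<close>

lemma set_integrable_lborel_if_integrable_on_nonneg:
  fixes f :: "real \<Rightarrow> real"
  assumes "f integrable_on S" "\<And>x. x \<in> S \<Longrightarrow> 0 \<le> f x" "S \<in> sets borel"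
    "f \<in> borel_measurable borel"
  shows "set_integrable lborel S f"
proof -
  have "f absolutely_integrable_on S"
    by (rule nonnegative_absolutely_integrable_1) (use assms in auto)
  then have "integrable lebesgue (\<lambda>x. indicator S x *\<^sub>R f x)"
    by (simp add: set_integrable_def)
  moreover have "(\<lambda>x. indicator S x *\<^sub>R f x) \<in> borel_measurable lborel"
    using assms(3,4) by measurable
  ultimately show ?thesis
    unfolding set_integrable_def using integrable_completion by blast
qed

lemma set_integral_pos_lborel:
  fixes f :: "real \<Rightarrow> real"
  assumes "set_integrable lborel A f" "\<And>x. x \<in> A \<Longrightarrow> f x \<ge> 0"
    "u < v" "{u..v} \<subseteq> A" "\<And>x. x \<in> {u..v} \<Longrightarrow> f x > 0"
  shows "(LINT x:A|lborel. f x) > 0"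
proof -
  let ?g = "\<lambda>x. indicator A x *\<^sub>R f x"
  have int: "integrable lborel ?g"
    using assms(1) by (simp add: set_integrable_def)
  have nonneg: "AE x in lborel. 0 \<le> ?g x"
    using assms(2) by (intro AE_I2) (auto simp: indicator_def)
  have "integral\<^sup>L lborel ?g \<noteq> 0"
  proof
    assume "integral\<^sup>L lborel ?g = 0"
    then have "AE x in lborel. ?g x = 0"
      using integral_nonneg_eq_0_iff_AE[OF int nonneg] by simp
    then have "AE x in lborel. x \<notin> {u..v}"
      by (rule AE_mp) (intro AE_I2, use assms(4,5) in \<open>auto simp: indicator_def\<close>, fastforce)
    then have "emeasure lborel {u..v} = 0"
      by (subst (asm) AE_iff_measurable[of "{u..v}"]) auto
    then show False
      using assms(3) by simp
  qed
  then show ?thesis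
    using integral_nonneg_AE[OF nonneg] unfolding set_lebesgue_integral_def by simp
qed

lemma mult_exp_neg_le:
  fixes k r :: real
  assumes "k > 0" "r \<ge> 0"
  shows "r * exp (- k * r) \<le> (2 / k) * exp (- (k / 2) * r)"
proof -
  have "1 + k * r / 2 \<le> exp (k * r / 2)"
    by (rule exp_ge_add_one_self)
  then have "r \<le> (2 / k) * exp (k * r / 2)"
    using assms by (simp add: field_simps)
  then have "r * exp (- k * r) \<le> (2 / k) * exp (k * r / 2) * exp (- k * r)"
    by (intro mult_right_mono) auto
  also have "\<dots> = (2 / k) * exp (- (k / 2) * r)"
    by (simp add: mult.assoc exp_add[symmetric])
  finally show ?thesis .
qed

lemma set_integrable_exp_neg_atLeast:
  fixes k c :: real
  assumes "k > 0"
  shows "set_integrable lborel {c..} (\<lambda>r. exp (- k * r))"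
  by (rule set_integrable_lborel_if_integrable_on_nonneg)
    (use integrable_on_exp_minus_to_infinity[OF assms] in auto)

lemma set_integrable_mult_exp_neg_atLeast:
  fixes k c :: real
  assumes "k > 0" "c \<ge> 0"
  shows "set_integrable lborel {c..} (\<lambda>r. r * exp (- k * r))"
proof (rule set_integrable_bound)
  show "set_integrable lborel {c..} (\<lambda>r. (2 / k) * exp (- (k / 2) * r))"
    using assms by (intro set_integrable_mult_right set_integrable_exp_neg_atLeast) auto
  show "set_borel_measurable lborel {c..} (\<lambda>r. r * exp (- k * r))"
    unfolding set_borel_measurable_def by measurable
  show "AE r in lborel. r \<in> {c..} \<longrightarrow>
      norm (r * exp (- k * r)) \<le> norm ((2 / k) * exp (- (k / 2) * r))"
    using assms mult_exp_neg_le[OF assms(1)] by (intro AE_I2 impI) auto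
qed

section \<open>The Laplace transform of a stretched exponential\<close>

definition laplace_stretched_exp :: "real \<Rightarrow> real \<Rightarrow> real \<Rightarrow> real" where
  "laplace_stretched_exp c p k = (LINT r:{0..}|lborel. exp (- k * r - c * r powr p))"

lemma stretched_exp_le_exp:
  fixes k c p r :: real
  assumes "c \<ge> 0"
  shows "exp (- k * r - c * r powr p) \<le> exp (- k * r)"
  using assms by simp

lemma set_integrable_stretched_exp:
  fixes k c p :: real
  assumes "k > 0" "c \<ge> 0"
  shows "set_integrable lborel {0..} (\<lambda>r. exp (- k * r - c * r powr p))"
proof (rule set_integrable_bound[OF set_integrable_exp_neg_atLeast[OF assms(1)]])
  show "set_borel_measurable lborel {0..} (\<lambda>r. exp (- k * r - c * r powr p))"
    unfolding set_borel_measurable_def by measurable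
  show "AE r in lborel. r \<in> {0..} \<longrightarrow>
      norm (exp (- k * r - c * r powr p)) \<le> norm (exp (- k * r))"
    using stretched_exp_le_exp[OF assms(2)] by (intro AE_I2 impI) simp
qed

lemma set_integrable_mult_stretched_exp:
  fixes k c p :: real
  assumes "k > 0" "c \<ge> 0"
  shows "set_integrable lborel {0..} (\<lambda>r. r * exp (- k * r - c * r powr p))"
proof (rule set_integrable_bound[OF set_integrable_mult_exp_neg_atLeast[OF assms(1), of 0]])
  show "set_borel_measurable lborel {0..} (\<lambda>r. r * exp (- k * r - c * r powr p))"
    unfolding set_borel_measurable_def by measurable
  show "AE r in lborel. r \<in> {0..} \<longrightarrow>
      norm (r * exp (- k * r - c * r powr p)) \<le> norm (r * exp (- k * r))"
    using stretched_exp_le_exp[OF assms(2)] by (intro AE_I2 impI) (auto intro: mult_left_mono)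
qed simp

lemma laplace_stretched_exp_pos:
  fixes k c p :: real
  assumes "k > 0" "c \<ge> 0"
  shows "laplace_stretched_exp c p k > 0"
  unfolding laplace_stretched_exp_def
  by (rule set_integral_pos_lborel[where u = 1 and v = 2])
    (use set_integrable_stretched_exp[OF assms] in auto)

lemma first_moment_stretched_exp_pos:
  fixes k c p :: real
  assumes "k > 0" "c \<ge> 0"
  shows "(LINT r:{0..}|lborel. r * exp (- k * r - c * r powr p)) > 0"
  by (rule set_integral_pos_lborel[where u = 1 and v = 2])
    (use set_integrable_mult_stretched_exp[OF assms] in auto)

lemma laplace_stretched_exp_shift:
  fixes k c p \<delta> :: real
  assumes "k > 0" "c \<ge> 0" "\<delta> < k"
  shows "laplace_stretched_exp c p (k - \<delta>) \<ge> laplace_stretched_exp c p k +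
      \<delta> * (LINT r:{0..}|lborel. r * exp (- k * r - c * r powr p))"
proof -
  let ?e = "\<lambda>r. exp (- k * r - c * r powr p)"
  have int: "set_integrable lborel {0..} ?e"
    "set_integrable lborel {0..} (\<lambda>r. \<delta> * (r * ?e r))"
    "set_integrable lborel {0..} (\<lambda>r. exp (- (k - \<delta>) * r - c * r powr p))"
    using assms set_integrable_stretched_exp[of k c p] set_integrable_mult_stretched_exp[of k c p]
      set_integrable_stretched_exp[of "k - \<delta>" c p] by auto
  have pointwise: "?e r + \<delta> * (r * ?e r) \<le> exp (- (k - \<delta>) * r - c * r powr p)" for r
  proof -
    have "?e r * (1 + \<delta> * r) \<le> ?e r * exp (\<delta> * r)"
      by (rule mult_left_mono) auto
    also have "\<dots> = exp (- (k - \<delta>) * r - c * r powr p)"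
      by (simp add: exp_add[symmetric] algebra_simps)
    finally show ?thesis
      by (simp add: algebra_simps)
  qed
  have "(LINT r:{0..}|lborel. ?e r + \<delta> * (r * ?e r))
      \<le> (LINT r:{0..}|lborel. exp (- (k - \<delta>) * r - c * r powr p))"
    by (rule set_integral_mono[OF set_integral_add(1)[OF int(1,2)] int(3) pointwise])
  then show ?thesis
    using set_integral_add(2)[OF int(1,2)] unfolding laplace_stretched_exp_def by simp
qed

lemma p_cov_eq_laplace_stretched_exp:
  "p_cov mu sigma2 T x alpha =
     pi * x * laplace_stretched_exp (mu * T * sigma2) (alpha / 2) (pi * x * beta_fn mu T alpha)"
  unfolding p_cov_def laplace_stretched_exp_def by (simp add: algebra_simps)

section \<open>Positivity of \<open>\<beta>\<close>\<close>

lemma has_integral_powr_atLeast: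
  fixes x s :: real
  assumes "x > 0" "s < 0"
  shows "((\<lambda>t. t powr (s - 1)) has_integral (x powr s / (- s))) {x..}"
proof (rule has_integral_to_inf)
  fix y
  show "(\<lambda>t. t powr (s - 1)) integrable_on {x..y}"
    using assms by (intro integrable_continuous_interval continuous_on_powr') auto
next
  have deriv: "((\<lambda>t. t powr s / s) has_vector_derivative t powr (s - 1)) (at t within {x..y})"
    if "t \<ge> x" for t y
  proof -
    have "((\<lambda>t. t powr s / s) has_real_derivative s * t powr (s - 1) / s) (at t)"
      using that assms by (intro DERIV_cdivide has_real_derivative_powr) auto
    then show ?thesis
      using assms
      by (simp add: has_real_derivative_iff_has_vector_derivative has_vector_derivative_at_within)
  qed
  have "((\<lambda>t. t powr (s - 1)) has_integral (y powr s / s - x powr s / s)) {x..y}"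
    if "y \<ge> x" for y
    using that by (intro fundamental_theorem_of_calculus deriv) auto
  then have "\<forall>\<^sub>F y in at_top.
      y powr s / s - x powr s / s = integral {x..y} (\<lambda>t. t powr (s - 1))"
    unfolding eventually_at_top_linorder by (metis integral_unique)
  moreover have "((\<lambda>y. y powr s / s - x powr s / s) \<longlongrightarrow> 0 / s - x powr s / s) at_top"
    by (intro tendsto_intros tendsto_neg_powr assms filterlim_ident) (use assms in simp)
  ultimately show "((\<lambda>y. integral {x..y} (\<lambda>t. t powr (s - 1))) \<longlongrightarrow> x powr s / - s) at_top"
    by (simp add: Lim_transform_eventually)
qed auto

lemma upper_inc_Gamma_nonneg: "upper_inc_Gamma s x \<ge> 0"
  unfolding upper_inc_Gamma_def set_lebesgue_integral_def
  by (intro integral_nonneg_AE AE_I2) (auto simp: indicator_def)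

lemma upper_inc_Gamma_le:
  fixes x s :: real
  assumes "x > 0" "s < 0"
  shows "upper_inc_Gamma s x \<le> x powr s / (- s)"
proof -
  have int_powr: "set_integrable lborel {x..} (\<lambda>t. t powr (s - 1))"
    by (rule set_integrable_lborel_if_integrable_on_nonneg)
      (use has_integral_powr_atLeast[OF assms] in auto)
  have le: "t powr (s - 1) * exp (- t) \<le> t powr (s - 1)" if "t \<in> {x..}" for t
    using mult_left_mono[of "exp (- t)" 1 "t powr (s - 1)"] that assms by simp
  have int: "set_integrable lborel {x..} (\<lambda>t. t powr (s - 1) * exp (- t))"
  proof (rule set_integrable_bound[OF int_powr])
    show "set_borel_measurable lborel {x..} (\<lambda>t. t powr (s - 1) * exp (- t))"
      unfolding set_borel_measurable_def by measurable
    show "AE t in lborel. t \<in> {x..} \<longrightarrow> norm (t powr (s - 1) * exp (- t)) \<le> norm (t powr (s - 1))"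
      using le by (intro AE_I2 impI) (simp add: abs_mult)
  qed
  have "upper_inc_Gamma s x \<le> (LINT t:{x..}|lborel. t powr (s - 1))"
    unfolding upper_inc_Gamma_def by (rule set_integral_mono[OF int int_powr le])
  also have "\<dots> = x powr s / (- s)"
    using set_borel_integral_eq_integral(2)[OF int_powr] has_integral_powr_atLeast[OF assms]
    by (simp add: integral_unique)
  finally show ?thesis .
qed

lemma borel_measurable_upper_inc_Gamma_scaled:
  "(\<lambda>g. upper_inc_Gamma s (c * g)) \<in> borel_measurable borel"
  unfolding upper_inc_Gamma_def set_lebesgue_integral_def
proof (rule lborel.borel_measurable_lebesgue_integral)
  have sets_eq: "sets (borel \<Otimes>\<^sub>M lborel) = sets (borel \<Otimes>\<^sub>M (borel::real measure))"
    by (rule sets_pair_measure_cong) auto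
  have "(\<lambda>x::real \<times> real. snd x powr (s - 1) * exp (- snd x)) \<in> borel_measurable (borel \<Otimes>\<^sub>M borel)"
    by (intro borel_measurable_times; measurable)
  moreover have "Measurable.pred (borel \<Otimes>\<^sub>M borel) (\<lambda>x::real \<times> real. c * fst x \<le> snd x)"
    by measurable
  ultimately have "(\<lambda>x::real \<times> real. indicator {c * fst x..} (snd x) *\<^sub>R
      (snd x powr (s - 1) * exp (- snd x))) \<in> borel_measurable (borel \<Otimes>\<^sub>M borel)"
    unfolding indicator_def atLeast_iff by measurable
  then show "(\<lambda>(x, t). indicat_real {c * x..} t *\<^sub>R (t powr (s - 1) * exp (- t)))
      \<in> borel_measurable (borel \<Otimes>\<^sub>M lborel)"
    using measurable_cong_sets[OF sets_eq refl] by (simp add: split_beta')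
qed

lemma Gamma_real_neg:
  fixes s :: real
  assumes "-1 < s" "s < 0"
  shows "Gamma s < 0"
proof -
  have "s \<notin> \<int>\<^sub>\<le>\<^sub>0"
    using assms by (auto elim!: nonpos_Ints_cases)
  then have "Gamma (s + 1) = s * Gamma s"
    by (rule Gamma_plus1)
  moreover have "Gamma (s + 1) > 0"
    using assms by auto
  ultimately show ?thesis
    using assms by (metis mult_neg_pos not_less_iff_gr_or_eq zero_less_mult_iff)
qed

lemma powr_le_one_plus:
  fixes q g :: real
  assumes "0 < q" "q \<le> 1" "g \<ge> 0"
  shows "g powr q \<le> 1 + g"
proof (cases "g \<le> 1")
  case True
  then have "g powr q \<le> 1"
    using assms by (intro powr_le1) auto
  then show ?thesis
    using assms by simp
next
  case False
  then have "g powr q \<le> g powr 1"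
    using assms by (intro powr_mono) auto
  then show ?thesis
    using False by simp
qed

definition beta_integrand :: "real \<Rightarrow> real \<Rightarrow> real \<Rightarrow> real \<Rightarrow> real" where
  "beta_integrand mu T alpha g = mu * exp (- mu * g) *
     (g powr (2 / alpha) * (upper_inc_Gamma (- 2 / alpha) (mu * T * g) - Gamma (- 2 / alpha)))"

lemma beta_fn_eq:
  "beta_fn mu T alpha =
     2 * (mu * T) powr (2 / alpha) / alpha * (LINT g:{0<..}|lborel. beta_integrand mu T alpha g)"
  unfolding beta_fn_def beta_integrand_def ..

lemma beta_integrand_pos:
  fixes mu T alpha g :: real
  assumes "mu > 0" "alpha > 2" "g > 0"
  shows "beta_integrand mu T alpha g > 0"
proof -
  have "Gamma (- 2 / alpha) < 0"
    using assms by (intro Gamma_real_neg) (auto simp: field_simps)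
  then have "upper_inc_Gamma (- 2 / alpha) (mu * T * g) - Gamma (- 2 / alpha) > 0"
    using upper_inc_Gamma_nonneg[of "- 2 / alpha" "mu * T * g"] by linarith
  then show ?thesis
    unfolding beta_integrand_def using assms by simp
qed

lemma beta_integrand_le:
  fixes mu T alpha g :: real
  assumes "mu > 0" "T > 0" "alpha > 2" "g > 0"
  defines "C \<equiv> (mu * T) powr (- 2 / alpha) / (2 / alpha)"
  shows "beta_integrand mu T alpha g \<le>
    mu * (C - Gamma (- 2 / alpha)) * exp (- mu * g) - mu * Gamma (- 2 / alpha) * (g * exp (- mu * g))"
proof -
  let ?q = "2 / alpha" and ?G = "- Gamma (- 2 / alpha)"
  have q: "0 < ?q" "?q \<le> 1"
    using assms by (auto simp: field_simps)
  have G: "?G > 0"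
    using assms by (simp add: Gamma_real_neg field_simps)
  have "g powr ?q * upper_inc_Gamma (- ?q) (mu * T * g) \<le> g powr ?q * ((mu * T * g) powr (- ?q) / ?q)"
    using upper_inc_Gamma_le[of "mu * T * g" "- ?q"] assms q by (intro mult_left_mono) auto
  also have "\<dots> = (g powr ?q * g powr (- ?q)) * C"
    using assms by (simp add: C_def powr_mult)
  also have "g powr ?q * g powr (- ?q) = 1"
    using assms by (simp add: powr_add[symmetric])
  finally have "g powr ?q * upper_inc_Gamma (- ?q) (mu * T * g) \<le> C"
    by simp
  moreover have "g powr ?q * ?G \<le> (1 + g) * ?G"
    using powr_le_one_plus[OF q] assms G by (intro mult_right_mono) auto
  ultimately have "g powr ?q * (upper_inc_Gamma (- ?q) (mu * T * g) + ?G) \<le> C + ?G + ?G * g"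
    by (simp add: algebra_simps)
  then have "beta_integrand mu T alpha g \<le> mu * exp (- mu * g) * (C + ?G + ?G * g)"
    unfolding beta_integrand_def using assms by (intro mult_left_mono) auto
  then show ?thesis
    by (simp add: algebra_simps)
qed

lemma set_integrable_beta_integrand:
  fixes mu T alpha :: real
  assumes "mu > 0" "T > 0" "alpha > 2"
  shows "set_integrable lborel {0<..} (beta_integrand mu T alpha)"
proof -
  define C where "C = (mu * T) powr (- 2 / alpha) / (2 / alpha)"
  let ?bound = "\<lambda>g. mu * (C - Gamma (- 2 / alpha)) * exp (- mu * g) -
      mu * Gamma (- 2 / alpha) * (g * exp (- mu * g))"
  have "set_integrable lborel {0..} ?bound"
    using assms by (intro set_integral_diff(1) set_integrable_mult_right
        set_integrable_exp_neg_atLeast set_integrable_mult_exp_neg_atLeast) auto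
  then have "set_integrable lborel {0<..} ?bound"
    by (rule set_integrable_subset) auto
  then show ?thesis
  proof (rule set_integrable_bound)
    show "set_borel_measurable lborel {0<..} (beta_integrand mu T alpha)"
      unfolding set_borel_measurable_def beta_integrand_def
      using borel_measurable_upper_inc_Gamma_scaled[of "- 2 / alpha" "mu * T"] by measurable
    have "norm (beta_integrand mu T alpha g) \<le> norm (?bound g)" if "g > 0" for g
      using beta_integrand_le[OF assms that] beta_integrand_pos[OF assms(1,3) that]
      unfolding C_def by (smt (verit) real_norm_def)
    then show "AE g in lborel. g \<in> {0<..} \<longrightarrow> norm (beta_integrand mu T alpha g) \<le> norm (?bound g)"
      by (intro AE_I2 impI) simp
  qed
qed

lemma beta_fn_pos:
  fixes mu T alpha :: real
  assumes "mu > 0" "T > 0" "alpha > 2"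
  shows "beta_fn mu T alpha > 0"
proof -
  have "(LINT g:{0<..}|lborel. beta_integrand mu T alpha g) > 0"
    using set_integrable_beta_integrand[OF assms] beta_integrand_pos[OF assms(1,3)]
    by (intro set_integral_pos_lborel[where u = 1 and v = 2]) (auto intro: less_imp_le)
  then show ?thesis
    unfolding beta_fn_eq using assms by simp
qed

section \<open>The optimal fraction of transmitters\<close>

text \<open>A step \<open>d\<close> to the left changes \<open>g (a - g)\<close> by \<open>d (2 g - a) - d\<^sup>2 \<ge> - d\<^sup>2\<close> and raises \<open>F\<close> by
  at least \<open>d L\<close>; the first-order gain wins once \<open>d (F g + L) < g (a - g) L\<close>.\<close>

lemma exists_left_improvement:
  fixes F :: "real \<Rightarrow> real" and a g L :: real
  assumes "0 < g" "a / 2 \<le> g" "g < a" "L > 0" "F g \<ge> 0"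
    and shift: "\<And>d. 0 < d \<Longrightarrow> d < g \<Longrightarrow> F (g - d) \<ge> F g + d * L"
  shows "\<exists>g' \<in> {0<..<a}. g * (a - g) * F g < g' * (a - g') * F g'"
proof -
  define P where "P = g * (a - g)"
  have P: "P > 0"
    using assms by (simp add: P_def)
  define d where "d = min (g / 2) (min 1 (P * L / (2 * (F g + L))))"
  have FL: "F g + L > 0"
    using assms by simp
  have d_bound: "d \<le> P * L / (2 * (F g + L))"
    unfolding d_def by (meson min.cobounded2 order_trans)
  have d: "0 < d" "d < g" "d \<le> 1" "d * (F g + L) \<le> P * L / 2"
  proof -
    show "0 < d"
      using assms P FL by (simp add: d_def)
    have "d \<le> g / 2"
      unfolding d_def by (rule min.cobounded1)
    then show "d < g"
      using assms by simp
    show "d \<le> 1"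
      unfolding d_def by (meson min.cobounded1 min.cobounded2 order_trans)
    have "d * (F g + L) \<le> P * L / (2 * (F g + L)) * (F g + L)"
      using FL by (intro mult_right_mono d_bound) auto
    also have "\<dots> = P * L / 2"
      using FL by (simp add: field_simps)
    finally show "d * (F g + L) \<le> P * L / 2" .
  qed
  define g' where "g' = g - d"
  define P' where "P' = g' * (a - g')"
  have g': "g' \<in> {0<..<a}"
    using assms d by (auto simp: g'_def)
  have P'_pos: "P' > 0"
    using g' by (simp add: P'_def)
  have "P' = P + d * (2 * g - a) - d\<^sup>2"
    by (simp add: P'_def P_def g'_def power2_eq_square algebra_simps)
  then have P'_ge: "P' \<ge> P - d\<^sup>2"
    using assms d by simp
  have "d * F g + d\<^sup>2 * L \<le> d * (F g + L)"
    using d assms by (simp add: power2_eq_square algebra_simps mult_right_le_one_le)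
  then have "d * F g + d\<^sup>2 * L \<le> P * L / 2"
    using d(4) by linarith
  then have "d * (P * L / 2) \<le> d * (P * L - (d * F g + d\<^sup>2 * L))"
    using d(1) by (intro mult_left_mono) linarith+
  moreover have "d * (P * L / 2) > 0"
    using d P assms by simp
  moreover have "(P - d\<^sup>2) * (F g + d * L) = P * F g + d * (P * L - (d * F g + d\<^sup>2 * L))"
    by (simp add: power2_eq_square algebra_simps)
  ultimately have "P * F g < (P - d\<^sup>2) * (F g + d * L)"
    by linarith
  also have "\<dots> \<le> P' * (F g + d * L)"
    using P'_ge FL d assms by (intro mult_right_mono) auto
  also have "\<dots> \<le> P' * F g'"
    using P'_pos shift[OF d(1,2)] by (simp add: g'_def)
  finally show ?thesis
    using g' unfolding P_def P'_def by blast
qed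

theorem lemma1:
  fixes lam T mu sigma2 alpha a g1s :: real
  assumes "lam > 0" "T > 0" "mu > 0" "sigma2 \<ge> 0" "alpha > 2" "0 < a" "a \<le> 1"
    and "g1s \<in> {0<..<a}"
    and "\<forall>g1 \<in> {0<..<a}. DSR lam mu sigma2 T alpha a g1 \<le> DSR lam mu sigma2 T alpha a g1s"
  shows "g1s < a / 2 \<and> a / 2 < a - g1s \<and> a - g1s < a \<and> a \<le> 1"
proof -
  define c where "c = mu * T * sigma2"
  define k where "k = pi * beta_fn mu T alpha * lam"
  define F where "F g = laplace_stretched_exp c (alpha / 2) (k * g)" for g
  define L where "L = k * (LINT r:{0..}|lborel. r * exp (- (k * g1s) * r - c * r powr (alpha / 2)))"
  have c: "c \<ge> 0" and k: "k > 0" and g1s: "0 < g1s" "g1s < a"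
    using assms beta_fn_pos[of mu T alpha] by (auto simp: c_def k_def)
  have DSR_eq: "DSR lam mu sigma2 T alpha a g = pi * lam\<^sup>2 * (g * (a - g) * F g)" for g
    unfolding DSR_def p_cov_eq_laplace_stretched_exp F_def k_def c_def
    by (simp add: power2_eq_square algebra_simps)
  have shift: "F (g1s - d) \<ge> F g1s + d * L" if "0 < d" "d < g1s" for d
    using laplace_stretched_exp_shift[OF _ c, of "k * g1s" "k * d" "alpha / 2"] that k g1s
    by (simp add: F_def L_def right_diff_distrib ac_simps)
  have "g1s < a / 2"
  proof (rule ccontr)
    assume "\<not> g1s < a / 2"
    moreover have "L > 0" "F g1s \<ge> 0"
      using k g1s c first_moment_stretched_exp_pos[of "k * g1s" c] laplace_stretched_exp_pos[of "k * g1s" c]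
      by (auto simp: L_def F_def less_imp_le)
    ultimately obtain g' where "g' \<in> {0<..<a}" "g1s * (a - g1s) * F g1s < g' * (a - g') * F g'"
      using exists_left_improvement[of g1s a L F] g1s shift by auto
    then have "DSR lam mu sigma2 T alpha a g1s < DSR lam mu sigma2 T alpha a g'"
      unfolding DSR_eq using assms(1) by simp
    then show False
      using assms(9) \<open>g' \<in> {0<..<a}\<close> by (meson not_le)
  qed
  then show ?thesis
    using g1s assms(7) by auto
qed

end
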